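(* Let $F:\mathbb{R}^d\to\mathbb{R}^d$ be smooth and consider $\dot{x}=F(x)$. For a time step $h_n>0$, the scheme $$x_{n+1}=x_n+\big(e^{h_nF'(x_n)}-1\big)\big(F'(x_n)\big)^{-1}F(x_n),$$ which is the scheme $x_{n+1}=x_n+\delta(\bar x,h_n)F(x_n)$ with $\delta(\bar x,h)=\big(e^{hF'(\bar x)}-1\big)\big(F'(\bar x)\big)^{-1}$ and $\bar x=x_n$, is locally exact: for every $n$ it is locally exact at $\bar x=x_n$.
   Context: $F'(x)$ denotes the Jacobian matrix of $F$. Throughout, $F'(\bar x)$ is assumed invertible at the points $\bar x$ considered, and $1$ denotes the identity matrix. The linearization of $\dot{x}=F(x)$ around $\bar x$ is $\dot\xi=F'(\bar x)\xi+F(\bar x)$ with $\xi=x-\bar x$. Its exact discretization with step $h_n$ is $$\xi_{n+1}=e^{h_nF'(\bar x)}\xi_n+\big(e^{h_nF'(\bar x)}-1\big)F'(\bar x)^{-1}F(\bar x).$$ Consider a scheme $x_{n+1}-x_n=\delta(\bar x,h_n)\,\Psi(x_n,x_{n+1})$ in which the matrix $\delta$ depends only on $\bar x$ and $h_n$. Its linearization at $\bar x$ is obtained as follows: - substitute $x_n=\bar x+\xi_n$ and $x_{n+1}=\bar x+\xi_{n+1}$; - keep $\delta(\bar x,h_n)$ fixed; - retain only terms up to first order in $\xi_n,\xi_{n+1}$. The scheme is locally exact at $\bar x$ if this linear relation coincides with the exact discretization above. It is locally exact if there is a sequence $\bar x_n$ with $\bar x_n-x_n=O(h_n)$ such that,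 for every $n$, the scheme is locally exact at $\bar x_n$. *)

theory Defs
  imports "HOL-Analysis.Analysis"
begin

fun matpow :: "real^'n^'n \<Rightarrow> nat \<Rightarrow> real^'n^'n" where
  "matpow A 0 = mat 1"
| "matpow A (Suc k) = A ** matpow A k"

definition mat_exp :: "real^'n^'n \<Rightarrow> real^'n^'n" where
  "mat_exp A = (\<Sum>k. (1 / fact k) *\<^sub>R matpow A k)"

text \<open>Exact discretization (step h) of the linearization of x' = F(x) around xb,
  where J xb is the Jacobian F'(xb):
  xi_{n+1} = e^{h J} xi_n + (e^{h J} - 1) J^{-1} F(xb).\<close>

definition exact_step ::
  "(real^'n \<Rightarrow> real^'n) \<Rightarrow> (real^'n \<Rightarrow> real^'n^'n) \<Rightarrow> real^'n \<Rightarrow> real \<Rightarrow> real^'n \<Rightarrow> real^'n" where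
  "exact_step F J xb h \<xi> =
     mat_exp (h *\<^sub>R J xb) *v \<xi> + (mat_exp (h *\<^sub>R J xb) - mat 1) *v (matrix_inv (J xb) *v F xb)"

text \<open>The scheme x_{n+1} - x_n = \<delta>(xb,h) \<Psi>(x_n,x_{n+1}) is locally exact at xb (for step h):
  its linearization at xb (substitute x_n = xb + \<xi>_n, x_{n+1} = xb + \<xi>_{n+1}, keep \<delta>(xb,h) fixed,
  keep first-order terms of \<Psi>, i.e. \<Psi>(xb,xb) + D\<Psi>(xb,xb)(\<xi>_n,\<xi>_{n+1})) defines exactly the
  same relation between \<xi>_n and \<xi>_{n+1} as the exact discretization.\<close>

definition locally_exact_at ::
  "(real^'n \<Rightarrow> real^'n) \<Rightarrow> (real^'n \<Rightarrow> real^'n^'n) \<Rightarrow> (real^'n \<Rightarrow> real \<Rightarrow> real^'n^'n)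
    \<Rightarrow> (real^'n \<Rightarrow> real^'n \<Rightarrow> real^'n) \<Rightarrow> real^'n \<Rightarrow> real \<Rightarrow> bool" where
  "locally_exact_at F J \<delta> \<Psi> xb h \<longleftrightarrow>
     (\<exists>L. ((\<lambda>p. \<Psi> (fst p) (snd p)) has_derivative L) (at (xb, xb)) \<and>
          (\<forall>\<xi>0 \<xi>1. (\<xi>1 - \<xi>0 = \<delta> xb h *v (\<Psi> xb xb + L (\<xi>0, \<xi>1)))
                   \<longleftrightarrow> \<xi>1 = exact_step F J xb h \<xi>0))"

end

theory Submission
  imports Defs
begin

text \<open>The linearization of the scheme at \<open>xb\<close> is the affine relation
  \<open>\<xi>\<^sub>1 - \<xi>\<^sub>0 = \<delta> (F xb + F'(xb) \<xi>\<^sub>0)\<close>. With \<open>\<delta> = (E - 1) F'(xb)\<inverse>\<close> and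
  \<open>E = e\<^bsup>h F'(xb)\<^esup>\<close>, the factor \<open>F'(xb)\<inverse> F'(xb)\<close> cancels in the linear part, which
  becomes \<open>(E - 1) \<xi>\<^sub>0\<close>; moving \<open>\<xi>\<^sub>0\<close> across gives precisely the exact discretization.
  Nothing about the exponential beyond its being some matrix \<open>E\<close> is needed.\<close>

lemma matrix_inv_left:
  fixes A :: "real^'n^'n"
  assumes "invertible A"
  shows "matrix_inv A ** A = mat 1"
proof -
  have "\<exists>A'. A ** A' = mat 1 \<and> A' ** A = mat 1"
    using assms unfolding invertible_def by blast
  then have "A ** matrix_inv A = mat 1 \<and> matrix_inv A ** A = mat 1"
    unfolding matrix_inv_def by (rule someI_ex)
  then show ?thesis by simp
qed

lemma has_derivative_fst_compose:
  assumes "(f has_derivative f') (at a)"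
  shows "((\<lambda>p. f (fst p)) has_derivative (\<lambda>p. f' (fst p))) (at (a, b))"
  using has_derivative_compose[OF has_derivative_fst[OF has_derivative_ident]] assms
  by (metis fst_conv)

lemma affine_step_iff_exact_step:
  fixes A E :: "real^'n^'n"
  assumes "invertible A"
  shows "\<xi>\<^sub>1 - \<xi>\<^sub>0 = ((E - mat 1) ** matrix_inv A) *v (f + A *v \<xi>\<^sub>0)
     \<longleftrightarrow> \<xi>\<^sub>1 = E *v \<xi>\<^sub>0 + (E - mat 1) *v (matrix_inv A *v f)"
proof -
  have "((E - mat 1) ** matrix_inv A) *v (f + A *v \<xi>\<^sub>0)
      = (E - mat 1) *v (matrix_inv A *v f) + (E - mat 1) *v ((matrix_inv A ** A) *v \<xi>\<^sub>0)"
    by (simp add: matrix_vector_right_distrib matrix_vector_mul_assoc[symmetric])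
  also have "\<dots> = (E - mat 1) *v (matrix_inv A *v f) + E *v \<xi>\<^sub>0 - \<xi>\<^sub>0"
    by (simp add: matrix_inv_left[OF assms] matrix_vector_mult_diff_rdistrib)
  finally have linearized: "((E - mat 1) ** matrix_inv A) *v (f + A *v \<xi>\<^sub>0)
      = (E - mat 1) *v (matrix_inv A *v f) + E *v \<xi>\<^sub>0 - \<xi>\<^sub>0" .
  have "\<And>a b c d :: real^'n. a - b = c + d - b \<longleftrightarrow> a = d + c"
    by (auto simp: algebra_simps)
  then show ?thesis
    unfolding linearized .
qed

lemma locally_exact_at_exponential_scheme:
  assumes "(F has_derivative (\<lambda>v. J xb *v v)) (at xb)"
    and "invertible (J xb)"
  shows "locally_exact_at F J (\<lambda>y s. (mat_exp (s *\<^sub>R J y) - mat 1) ** matrix_inv (J y))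
           (\<lambda>u v. F u) xb h"
  unfolding locally_exact_at_def exact_step_def
proof (intro exI conjI allI)
  show "((\<lambda>p. F (fst p)) has_derivative (\<lambda>p. J xb *v fst p)) (at (xb, xb))"
    using has_derivative_fst_compose[OF assms(1)] .
qed (simp add: affine_step_iff_exact_step[OF assms(2)])

theorem corollary4p1:
  fixes F :: "real^'n \<Rightarrow> real^'n"
    and J :: "real^'n \<Rightarrow> real^'n^'n"
    and x :: "nat \<Rightarrow> real^'n"
    and h :: "nat \<Rightarrow> real"
  assumes jacobian: "\<forall>y. (F has_derivative (\<lambda>v. J y *v v)) (at y)"
    and invertible: "\<forall>n. invertible (J (x n))"
    and step_pos: "\<forall>n. h n > 0"
    and scheme: "\<forall>n. x (Suc n) = x n +
          ((mat_exp (h n *\<^sub>R J (x n)) - mat 1) ** matrix_inv (J (x n))) *v F (x n)"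
  shows "\<forall>n. locally_exact_at F J
            (\<lambda>xb s. (mat_exp (s *\<^sub>R J xb) - mat 1) ** matrix_inv (J xb))
            (\<lambda>u v. F u) (x n) (h n)"
  using jacobian invertible locally_exact_at_exponential_scheme by blast

end
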